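(* Let $\mathcal A$ be a unital associative algebra over $\mathbb C$, $L\ge0$, and let $A,B,C\in\mathcal A$ satisfy $[A,B]=C$ and $[A,C]=\sum_{i=1}^{L+1}\alpha_iA^i+\delta B+\epsilon+\beta\{A,B\}$. Define numbers $\bar x_{i,j}$ ($j\ge1$, $0\le i\le j-1$) and $\bar y_{i,j}$ ($j\ge1$, $0\le i\le j$) by $\bar x_{0,1}=1$, $\bar y_{0,1}=0$, $\bar y_{1,1}=1$ and, for $j\ge2$, $$\bar x_{i,j}=\bar x_{i-1,j-1}+\beta\bar x_{i,j-1}+\bar y_{i,j-1},\qquad \bar y_{i,j}=\delta\bar x_{i,j-1}+2\beta\bar x_{i-1,j-1}+\bar y_{i-1,j-1},$$ with the conventions $\bar x_{-1,j}=\bar y_{-1,j}=0$ and $\bar x_{j,j}=\bar x_{j+1,j}=0$ for all $j\ge1$. Then for all integers $i>j\ge1$, $$A^iBA^j-A^jBA^i=\sum_{k=0}^{j}\bar y_{k,j}[A^{i+k},B]-\sum_{k=0}^{j-1}\bar x_{k,j}\{A^{i+k},C\}.$$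
   Context: $[X,Y]=XY-YX$, $\{X,Y\}=XY+YX$, $A^0=1$. *)

theory Defs
  imports Complex_Main
begin

text \<open>A unital associative algebra over the complex numbers is modelled as a ring
  with unit of type 'a together with a unital ring homomorphism phi from complex
  into 'a whose image is central; scalar multiplication c.x is phi c * x.\<close>

definition central_complex_hom :: "(complex \<Rightarrow> 'a::ring_1) \<Rightarrow> bool" where
  "central_complex_hom \<phi> \<longleftrightarrow>
     \<phi> 1 = 1 \<and>
     (\<forall>a b. \<phi> (a + b) = \<phi> a + \<phi> b) \<and>
     (\<forall>a b. \<phi> (a * b) = \<phi> a * \<phi> b) \<and>
     (\<forall>c x. \<phi> c * x = x * \<phi> c)"

definition commutator :: "'a::ring \<Rightarrow> 'a \<Rightarrow> 'a" where
  "commutator X Y = X * Y - Y * X"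

definition anticommutator :: "'a::ring \<Rightarrow> 'a \<Rightarrow> 'a" where
  "anticommutator X Y = X * Y + Y * X"

text \<open>xyb beta delta j = (i. xbar(i,j), i. ybar(i,j)), with value 0 outside
  the index ranges 0 <= i <= j-1 (for xbar) and 0 <= i <= j (for ybar);
  this matches the conventions xbar(-1,j)=ybar(-1,j)=0, xbar(j,j)=xbar(j+1,j)=0.
  The level j = 0 is unused.\<close>

fun xyb :: "complex \<Rightarrow> complex \<Rightarrow> nat \<Rightarrow> (nat \<Rightarrow> complex) \<times> (nat \<Rightarrow> complex)" where
  "xyb \<beta> \<delta> 0 = (\<lambda>i. 0, \<lambda>i. 0)"
| "xyb \<beta> \<delta> (Suc 0) = (\<lambda>i. if i = 0 then 1 else 0, \<lambda>i. if i = 1 then 1 else 0)"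
| "xyb \<beta> \<delta> (Suc (Suc n)) =
    (let x = fst (xyb \<beta> \<delta> (Suc n)); y = snd (xyb \<beta> \<delta> (Suc n));
         xm = (\<lambda>i. if i = 0 then 0 else x (i - 1));
         ym = (\<lambda>i. if i = 0 then 0 else y (i - 1))
     in (\<lambda>i. if i < Suc (Suc n) then xm i + \<beta> * x i + y i else 0,
         \<lambda>i. if i \<le> Suc (Suc n) then \<delta> * x i + 2 * \<beta> * xm i + ym i else 0))"

definition xbar :: "complex \<Rightarrow> complex \<Rightarrow> nat \<Rightarrow> nat \<Rightarrow> complex" where
  "xbar \<beta> \<delta> i j = fst (xyb \<beta> \<delta> j) i"

definition ybar :: "complex \<Rightarrow> complex \<Rightarrow> nat \<Rightarrow> nat \<Rightarrow> complex" where
  "ybar \<beta> \<delta> i j = snd (xyb \<beta> \<delta> j) i"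

end

theory Submission
  imports Defs
begin

(* Write  D p q = A^p B A^q - A^q B A^p  (asym_sandwich A B p q); the
   left-hand side of the theorem is D i j.  Sandwiching the relation for
   [A,C] = [A,[A,B]] between A^p and A^q and antisymmetrising kills the polynomial
   part (it commutes with A) and yields the recurrence

     D(p+2,q) - 2 D(p+1,q+1) + D(p,q+2) = delta D(p,q) + beta (D(p+1,q) + D(p,q+1)).

   The right-hand side of the theorem is the value at q = 0 of the expansion
     E_j(q) = sum_k ybar(k,j) D(i+k,q) - sum_k xbar(k,j) (D(i+k+1,q) - D(i+k,q+1)),
   since [A^m,B] = D(m,0) and {A^m,C} = D(m+1,0) - D(m,1).  Using the recursion
   for xbar, ybar, a shift of summation index and the recurrence, one shows
   E_(j+1)(q) = E_j(q+1); as E_1(q) = D(i,q+1), induction gives E_j(q) = D(i,q+j),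
   and q = 0 is the theorem. *)

lemma central_complex_homD:
  assumes "central_complex_hom \<phi>"
  shows central_complex_hom_1: "\<phi> 1 = 1"
    and central_complex_hom_add: "\<phi> (a + b) = \<phi> a + \<phi> b"
    and central_complex_hom_mult: "\<phi> (a * b) = \<phi> a * \<phi> b"
    and central_complex_hom_central: "\<phi> c * x = x * \<phi> c"
  using assms unfolding central_complex_hom_def by blast+

lemma central_complex_hom_0:
  assumes "central_complex_hom \<phi>" shows "\<phi> 0 = 0"
  using central_complex_hom_add[OF assms, of 0 0]
  by (simp only: add_0_left add_cancel_right_right)

lemma central_complex_hom_2:
  assumes "central_complex_hom \<phi>" shows "\<phi> 2 = 2"
  using central_complex_hom_add[OF assms, of 1 1] central_complex_hom_1[OF assms]
  by (metis one_add_one)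

definition asym_sandwich :: "'a::ring_1 \<Rightarrow> 'a \<Rightarrow> nat \<Rightarrow> nat \<Rightarrow> 'a" where
  "asym_sandwich A X p q = A ^ p * X * A ^ q - A ^ q * X * A ^ p"

lemma power_left_commute: "A * (A ^ n * X) = A ^ n * (A * X)" for A :: "'a::monoid_mult"
  by (simp flip: mult.assoc add: power_commutes)

lemma asym_sandwich_add:
  "asym_sandwich A (X + Y) p q = asym_sandwich A X p q + asym_sandwich A Y p q"
  unfolding asym_sandwich_def by (simp add: algebra_simps)

lemma asym_sandwich_scalar:
  assumes "central_complex_hom \<phi>"
  shows "asym_sandwich A (\<phi> c * X) p q = \<phi> c * asym_sandwich A X p q"
  using central_complex_hom_central[OF assms]
  unfolding asym_sandwich_def by (metis mult.assoc right_diff_distrib)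

lemma asym_sandwich_commuting:
  fixes A P :: "'a::ring_1"
  assumes "P * A = A * P"
  shows "asym_sandwich A P p q = 0"
proof -
  have "A ^ n * P = P * A ^ n" for n
    using power_commuting_commutes[of A P n] assms by simp
  then have "A ^ m * P * A ^ n = P * A ^ (m + n)" for m n
    by (simp add: mult.assoc power_add)
  then show ?thesis
    unfolding asym_sandwich_def by (simp add: add.commute)
qed

lemma asym_sandwich_anticommutator:
  fixes A B :: "'a::ring_1"
  shows "asym_sandwich A (anticommutator A B) p q
     = asym_sandwich A B (p + 1) q + asym_sandwich A B p (q + 1)"
  unfolding asym_sandwich_def anticommutator_def
  by (simp add: algebra_simps power_left_commute power_commutes)

lemma asym_sandwich_double_commutator:
  fixes A B :: "'a::ring_1"
  shows "asym_sandwich A (commutator A (commutator A B)) p q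
     = asym_sandwich A B (p + 2) q - 2 * asym_sandwich A B (p + 1) (q + 1) + asym_sandwich A B p (q + 2)"
  unfolding asym_sandwich_def commutator_def
  by (simp add: algebra_simps power_add power2_eq_square mult_2 power_left_commute power_commutes)

lemma commutator_power_left: "commutator (A ^ m) B = asym_sandwich A B m 0"
  unfolding commutator_def asym_sandwich_def by simp

lemma anticommutator_power_left:
  fixes A B :: "'a::ring_1"
  shows "anticommutator (A ^ m) (commutator A B) = asym_sandwich A B (m + 1) 0 - asym_sandwich A B m 1"
  unfolding anticommutator_def commutator_def asym_sandwich_def
  by (simp add: algebra_simps power_left_commute)

lemma central_polynomial_commutes:
  assumes "central_complex_hom \<phi>"
  shows "((\<Sum>k\<in>K. \<phi> (a k) * A ^ k) + \<phi> e) * A = A * ((\<Sum>k\<in>K. \<phi> (a k) * A ^ k) + \<phi> e)"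
proof -
  have "\<phi> c * A ^ k * A = A * (\<phi> c * A ^ k)" for c k
    by (metis central_complex_hom_central[OF assms] mult.assoc power_commutes)
  then show ?thesis
    using central_complex_hom_central[OF assms, of e A]
    by (simp add: distrib_left distrib_right sum_distrib_left sum_distrib_right)
qed

lemma asym_sandwich_recurrence:
  fixes A B P :: "'a::ring_1"
  assumes hom: "central_complex_hom \<phi>"
    and hAC: "commutator A (commutator A B) = P + \<phi> \<delta> * B + \<phi> \<beta> * anticommutator A B"
    and hP: "P * A = A * P"
  shows "asym_sandwich A B (p + 2) q - 2 * asym_sandwich A B (p + 1) (q + 1) + asym_sandwich A B p (q + 2)
     = \<phi> \<delta> * asym_sandwich A B p q
       + \<phi> \<beta> * (asym_sandwich A B (p + 1) q + asym_sandwich A B p (q + 1))"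
  using arg_cong[OF hAC, of "\<lambda>X. asym_sandwich A X p q"]
  by (simp add: asym_sandwich_double_commutator asym_sandwich_add asym_sandwich_scalar[OF hom]
      asym_sandwich_commuting[OF hP] asym_sandwich_anticommutator)

lemma xbar_ybar_support:
  assumes "1 \<le> j"
  shows "j \<le> k \<Longrightarrow> xbar \<beta> \<delta> k j = 0" and "j < k \<Longrightarrow> ybar \<beta> \<delta> k j = 0"
proof -
  obtain n where "j = Suc n" using assms by (cases j) auto
  then show "j \<le> k \<Longrightarrow> xbar \<beta> \<delta> k j = 0" and "j < k \<Longrightarrow> ybar \<beta> \<delta> k j = 0"
    by (cases n; auto simp: xbar_def ybar_def Let_def)+
qed

(* Right shift of a coefficient sequence, inserting a zero: the index i-1 of the paper. *)
definition seq_shift :: "(nat \<Rightarrow> 'a::zero) \<Rightarrow> nat \<Rightarrow> 'a" where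
  "seq_shift x k = (case k of 0 \<Rightarrow> 0 | Suc k' \<Rightarrow> x k')"

lemma seq_shift_simps [simp]: "seq_shift x 0 = 0" "seq_shift x (Suc k) = x k"
  by (simp_all add: seq_shift_def)

lemma xbar_ybar_Suc:
  assumes "1 \<le> j"
  shows "xbar \<beta> \<delta> k (Suc j) = seq_shift (\<lambda>k. xbar \<beta> \<delta> k j) k + \<beta> * xbar \<beta> \<delta> k j + ybar \<beta> \<delta> k j"
    and "ybar \<beta> \<delta> k (Suc j)
       = \<delta> * xbar \<beta> \<delta> k j + 2 * \<beta> * seq_shift (\<lambda>k. xbar \<beta> \<delta> k j) k + seq_shift (\<lambda>k. ybar \<beta> \<delta> k j) k"
proof -
  obtain n where j: "j = Suc n" using assms by (cases j) auto
  have sx: "xbar \<beta> \<delta> k j = 0" if "j \<le> k" for k using xbar_ybar_support[OF assms] that by blast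
  have sy: "ybar \<beta> \<delta> k j = 0" if "j < k" for k using xbar_ybar_support[OF assms] that by blast
  show "xbar \<beta> \<delta> k (Suc j) = seq_shift (\<lambda>k. xbar \<beta> \<delta> k j) k + \<beta> * xbar \<beta> \<delta> k j + ybar \<beta> \<delta> k j"
    using sx sy unfolding j by (auto simp: xbar_def ybar_def seq_shift_def Let_def split: nat.split)
  show "ybar \<beta> \<delta> k (Suc j)
       = \<delta> * xbar \<beta> \<delta> k j + 2 * \<beta> * seq_shift (\<lambda>k. xbar \<beta> \<delta> k j) k + seq_shift (\<lambda>k. ybar \<beta> \<delta> k j) k"
    using sx sy unfolding j by (auto simp: xbar_def ybar_def seq_shift_def Let_def split: nat.split)
qed

lemma sum_seq_shift:
  assumes hom: "central_complex_hom \<phi>" and "x M = 0"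
  shows "(\<Sum>k<Suc M. \<phi> (seq_shift x k) * h k) = (\<Sum>k<Suc M. \<phi> (x k) * h (Suc k))"
proof -
  have "(\<Sum>k<Suc M. \<phi> (seq_shift x k) * h k) = (\<Sum>k<M. \<phi> (x k) * h (Suc k))"
    by (simp add: sum.lessThan_Suc_shift central_complex_hom_0[OF hom] del: sum.lessThan_Suc)
  also have "\<dots> = (\<Sum>k<Suc M. \<phi> (x k) * h (Suc k))"
    using assms by (simp add: central_complex_hom_0[OF hom])
  finally show ?thesis .
qed

lemma hom_linear_combination:
  assumes hom: "central_complex_hom \<phi>"
  shows "\<phi> (a * u + b * v + w) * z = \<phi> u * (\<phi> a * z) + \<phi> v * (\<phi> b * z) + \<phi> w * z"
proof -
  have "\<phi> (c * t) = \<phi> t * \<phi> c" for c t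
    by (metis central_complex_hom_mult[OF hom] mult.commute)
  then show ?thesis
    by (simp add: central_complex_hom_add[OF hom] distrib_right mult.assoc)
qed

lemma coefficient_step:
  assumes hom: "central_complex_hom \<phi>"
    and x0: "x M = 0" and y0: "y M = 0"
    and h: "\<And>k. h k = g (Suc k) + \<phi> \<beta> * g k - \<phi> \<delta> * f k - 2 * \<phi> \<beta> * f (Suc k)"
  shows "(\<Sum>k<Suc M. \<phi> (\<delta> * x k + 2 * \<beta> * seq_shift x k + seq_shift y k) * f k)
       - (\<Sum>k<Suc M. \<phi> (seq_shift x k + \<beta> * x k + y k) * g k)
     = (\<Sum>k<Suc M. \<phi> (y k) * (f (Suc k) - g k)) - (\<Sum>k<Suc M. \<phi> (x k) * h k)"
proof -
  note shift = sum_seq_shift[OF hom]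
  have two: "\<phi> (2 * \<beta>) = 2 * \<phi> \<beta>"
    by (simp add: central_complex_hom_mult[OF hom] central_complex_hom_2[OF hom])
  have "(\<Sum>k<Suc M. \<phi> (\<delta> * x k + 2 * \<beta> * seq_shift x k + seq_shift y k) * f k)
      = (\<Sum>k<Suc M. \<phi> (x k) * (\<phi> \<delta> * f k)) + (\<Sum>k<Suc M. \<phi> (seq_shift x k) * (2 * \<phi> \<beta> * f k))
        + (\<Sum>k<Suc M. \<phi> (seq_shift y k) * f k)"
    by (simp add: hom_linear_combination[OF hom] two sum.distrib)
  also have "\<dots> = (\<Sum>k<Suc M. \<phi> (x k) * (\<phi> \<delta> * f k + 2 * \<phi> \<beta> * f (Suc k)) + \<phi> (y k) * f (Suc k))"
    unfolding shift[of x, OF x0] shift[of y, OF y0] by (simp add: sum.distrib distrib_left del: sum.lessThan_Suc)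
  finally have first: "(\<Sum>k<Suc M. \<phi> (\<delta> * x k + 2 * \<beta> * seq_shift x k + seq_shift y k) * f k)
      = (\<Sum>k<Suc M. \<phi> (x k) * (\<phi> \<delta> * f k + 2 * \<phi> \<beta> * f (Suc k)) + \<phi> (y k) * f (Suc k))" .
  have "(\<Sum>k<Suc M. \<phi> (seq_shift x k + \<beta> * x k + y k) * g k)
      = (\<Sum>k<Suc M. \<phi> (seq_shift x k) * g k) + (\<Sum>k<Suc M. \<phi> (x k) * (\<phi> \<beta> * g k))
        + (\<Sum>k<Suc M. \<phi> (y k) * g k)"
    using hom_linear_combination[OF hom, of 1 "seq_shift x k" \<beta> "x k" "y k" "g k" for k]
    by (simp add: central_complex_hom_1[OF hom] sum.distrib)
  also have "\<dots> = (\<Sum>k<Suc M. \<phi> (x k) * (g (Suc k) + \<phi> \<beta> * g k) + \<phi> (y k) * g k)"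
    unfolding shift[of x, OF x0] by (simp add: sum.distrib distrib_left del: sum.lessThan_Suc)
  finally have second: "(\<Sum>k<Suc M. \<phi> (seq_shift x k + \<beta> * x k + y k) * g k)
      = (\<Sum>k<Suc M. \<phi> (x k) * (g (Suc k) + \<phi> \<beta> * g k) + \<phi> (y k) * g k)" .
  have pointwise: "\<phi> (x k) * (\<phi> \<delta> * f k + 2 * \<phi> \<beta> * f (Suc k)) + \<phi> (y k) * f (Suc k)
      - (\<phi> (x k) * (g (Suc k) + \<phi> \<beta> * g k) + \<phi> (y k) * g k)
      = \<phi> (y k) * (f (Suc k) - g k) - \<phi> (x k) * h k" for k
    unfolding h by (simp add: algebra_simps)
  show ?thesis
    unfolding first second sum_subtractf[symmetric] pointwise ..
qed

(* The right-hand side of the theorem, written for an arbitrary family D in place of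
   the sandwich differences, with the second entry q free and sums cut off at M.
   The anticommutator {A^(i+k), C} appears as  D (i+k+1) q - D (i+k) (q+1). *)
definition expansion ::
  "(complex \<Rightarrow> 'a::ring_1) \<Rightarrow> complex \<Rightarrow> complex \<Rightarrow> (nat \<Rightarrow> nat \<Rightarrow> 'a) \<Rightarrow> nat \<Rightarrow> nat \<Rightarrow> nat \<Rightarrow> nat \<Rightarrow> 'a"
where
  "expansion \<phi> \<beta> \<delta> D i j M q =
     (\<Sum>k<M. \<phi> (ybar \<beta> \<delta> k j) * D (i + k) q)
   - (\<Sum>k<M. \<phi> (xbar \<beta> \<delta> k j) * (D (i + k + 1) q - D (i + k) (q + 1)))"

(* Level one: only ybar(1,1) = xbar(0,1) = 1 contribute, leaving D i (q+1). *)
lemma expansion_level_one: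
  assumes hom: "central_complex_hom \<phi>" and "2 \<le> M"
  shows "expansion \<phi> \<beta> \<delta> D i 1 M q = D i (q + 1)"
proof -
  have y: "\<phi> (ybar \<beta> \<delta> k 1) * D (i + k) q = (if k = 1 then D (i + 1) q else 0)" for k
    by (simp add: xbar_def ybar_def central_complex_hom_0[OF hom] central_complex_hom_1[OF hom])
  have x: "\<phi> (xbar \<beta> \<delta> k 1) * (D (i + k + 1) q - D (i + k) (q + 1))
      = (if k = 0 then D (i + 1) q - D i (q + 1) else 0)" for k
    by (simp add: xbar_def ybar_def central_complex_hom_0[OF hom] central_complex_hom_1[OF hom])
  show ?thesis
    unfolding expansion_def y x using assms(2) by simp
qed

lemma expansion_Suc:
  assumes hom: "central_complex_hom \<phi>"
    and R: "\<And>p q. D (p + 2) q - 2 * D (p + 1) (q + 1) + D p (q + 2)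
              = \<phi> \<delta> * D p q + \<phi> \<beta> * (D (p + 1) q + D p (q + 1))"
    and j: "1 \<le> j" "j < M"
  shows "expansion \<phi> \<beta> \<delta> D i (Suc j) (Suc M) q = expansion \<phi> \<beta> \<delta> D i j (Suc M) (q + 1)"
proof -
  define f where "f k = D (i + k) q" for k
  define g where "g k = D (i + k + 1) q - D (i + k) (q + 1)" for k
  define h where "h k = D (i + k + 1) (q + 1) - D (i + k) (q + 2)" for k
  have h_rec: "h k = g (Suc k) + \<phi> \<beta> * g k - \<phi> \<delta> * f k - 2 * \<phi> \<beta> * f (Suc k)" for k
    using R[of "i + k" q] unfolding f_def g_def h_def
    by (simp add: algebra_simps mult_2 add.assoc)
  have "expansion \<phi> \<beta> \<delta> D i (Suc j) (Suc M) q
      = (\<Sum>k<Suc M. \<phi> (ybar \<beta> \<delta> k j) * (f (Suc k) - g k)) - (\<Sum>k<Suc M. \<phi> (xbar \<beta> \<delta> k j) * h k)"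
    unfolding expansion_def xbar_ybar_Suc[OF j(1)] f_def[symmetric] g_def[symmetric]
    by (rule coefficient_step[where x = "\<lambda>k. xbar \<beta> \<delta> k j" and y = "\<lambda>k. ybar \<beta> \<delta> k j"
        and f = f and g = g and h = h,
        OF hom _ _ h_rec]) (use xbar_ybar_support[OF j(1)] j(2) in auto)
  also have "\<dots> = expansion \<phi> \<beta> \<delta> D i j (Suc M) (q + 1)"
    unfolding expansion_def f_def g_def h_def by (simp add: add.assoc)
  finally show ?thesis .
qed

lemma expansion_eq:
  assumes hom: "central_complex_hom \<phi>"
    and R: "\<And>p q. D (p + 2) q - 2 * D (p + 1) (q + 1) + D p (q + 2)
              = \<phi> \<delta> * D p q + \<phi> \<beta> * (D (p + 1) q + D p (q + 1))"
    and j: "1 \<le> j" and M: "j + 2 \<le> M"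
  shows "expansion \<phi> \<beta> \<delta> D i j M q = D i (q + j)"
  using j M
proof (induction j arbitrary: q M rule: dec_induct)
  case base
  then show ?case using expansion_level_one[OF hom] by simp
next
  case (step j)
  then obtain M' where M': "M = Suc M'" "j + 2 \<le> M'"
    by (cases M) auto
  have "expansion \<phi> \<beta> \<delta> D i (Suc j) M q = expansion \<phi> \<beta> \<delta> D i j M (q + 1)"
    unfolding M'(1) using expansion_Suc[OF hom R step(1)] M'(2) by simp
  also have "\<dots> = D i (q + Suc j)"
    using step.IH[of M "q + 1"] M' by simp
  finally show ?case .
qed

(* For D the sandwich differences and q = 0 the expansion is literally the right-hand
   side of the theorem; the extra summands with k beyond the paper's ranges vanish. *)
lemma expansion_as_brackets:
  fixes A B :: "'a::ring_1"
  assumes hom: "central_complex_hom \<phi>" and j: "1 \<le> j"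
  shows "expansion \<phi> \<beta> \<delta> (asym_sandwich A B) i j (j + 2) 0
     = (\<Sum>k = 0..j. \<phi> (ybar \<beta> \<delta> k j) * commutator (A ^ (i + k)) B)
     - (\<Sum>k = 0..<j. \<phi> (xbar \<beta> \<delta> k j) * anticommutator (A ^ (i + k)) (commutator A B))"
proof -
  have vanish: "ybar \<beta> \<delta> (Suc j) j = 0" "xbar \<beta> \<delta> j j = 0" "xbar \<beta> \<delta> (Suc j) j = 0"
    using xbar_ybar_support[OF j] by auto
  show ?thesis
    unfolding expansion_def commutator_power_left anticommutator_power_left
      atLeast0AtMost atLeast0LessThan lessThan_Suc_atMost[symmetric]
    by (simp add: vanish central_complex_hom_0[OF hom])
qed

(* Main theorem. *)
theorem lemma4:
  fixes \<phi> :: "complex \<Rightarrow> 'a::ring_1"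
    and A B C :: 'a
    and L :: nat and \<alpha> :: "nat \<Rightarrow> complex" and \<beta> \<delta> \<epsilon> :: complex
    and i j :: nat
  assumes alg: "central_complex_hom \<phi>"
    and hC: "commutator A B = C"
    and hAC: "commutator A C =
       (\<Sum>k = 1..L+1. \<phi> (\<alpha> k) * A ^ k) + \<phi> \<delta> * B + \<phi> \<epsilon> + \<phi> \<beta> * anticommutator A B"
    and hj: "1 \<le> j" and hij: "j < i"
  shows "A ^ i * B * A ^ j - A ^ j * B * A ^ i =
       (\<Sum>k = 0..j. \<phi> (ybar \<beta> \<delta> k j) * commutator (A ^ (i + k)) B)
     - (\<Sum>k = 0..<j. \<phi> (xbar \<beta> \<delta> k j) * anticommutator (A ^ (i + k)) C)"
proof -
  define P where "P = (\<Sum>k = 1..L+1. \<phi> (\<alpha> k) * A ^ k) + \<phi> \<epsilon>"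
  have P_comm: "P * A = A * P"
    unfolding P_def by (rule central_polynomial_commutes[OF alg])
  have "commutator A (commutator A B) = P + \<phi> \<delta> * B + \<phi> \<beta> * anticommutator A B"
    using hAC unfolding hC P_def by (simp add: algebra_simps)
  note R = asym_sandwich_recurrence[OF alg this P_comm]
  have "A ^ i * B * A ^ j - A ^ j * B * A ^ i = asym_sandwich A B i (0 + j)"
    by (simp add: asym_sandwich_def)
  also have "\<dots> = expansion \<phi> \<beta> \<delta> (asym_sandwich A B) i j (j + 2) 0"
    using expansion_eq[OF alg R hj] by simp
  also have "\<dots> = (\<Sum>k = 0..j. \<phi> (ybar \<beta> \<delta> k j) * commutator (A ^ (i + k)) B)
     - (\<Sum>k = 0..<j. \<phi> (xbar \<beta> \<delta> k j) * anticommutator (A ^ (i + k)) C)"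
    using expansion_as_brackets[OF alg hj, of \<beta> \<delta> A B i] unfolding hC .
  finally show ?thesis .
qed

end
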